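(* Let $(\mathcal{A},v)$ be a valued abelian group and $A_1,\dots,A_n$ subgroups of $\mathcal{A}$ such that each $(A_i,v|_{A_i})$ is spherically complete. If the sum $A_1+\dots+A_n\subseteq\mathcal{A}$ is pseudo-direct, then $(A_1+\dots+A_n, v)$ is spherically complete.
   Context: A valued abelian group $(A,v)$ is an abelian group $A$ with a map $v:A\to \Gamma\cup\{\infty\}$, $a\mapsto va$, onto a totally ordered set with largest element $\infty$, such that $va=\infty\iff a=0$ and $v(a-a')\ge\min\{va,va'\}$ for all $a,a'\in A$. For $a\in A$ and $\alpha\in v(A)$ the ball is $B_\alpha(a)=\{a'\in A\mid v(a-a')\ge\alpha\}$. A nest of balls is a set of balls totally ordered by inclusion; $(A,v)$ is spherically complete if every nest of balls has nonempty intersection. The sum $A_1+\dots+A_n$ of subgroups of $(\mathcal{A},v)$ is pseudo-direct if for every nonzero $a\in A_1+\dots+A_n$ there are $a_i\in A_i$ ($1\le i\le n$) with $v\sum_{i=1}^n a_i=\min_{1\le i\le n}va_i$ and $v\big(a-\sum_{i=1}^n a_i\big)>va$. *)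

theory Defs
  imports Main
begin

text \<open>A valued abelian group: the ambient group is the type 'a; the value set
  \<Gamma> \<union> {\<infinity>} is a linearly ordered type 'g whose top element plays the role of \<infinity>.\<close>
definition valued_group :: "('a::ab_group_add \<Rightarrow> 'g::{linorder,order_top}) \<Rightarrow> bool" where
  "valued_group v \<longleftrightarrow> (\<forall>a. v a = top \<longleftrightarrow> a = 0) \<and> (\<forall>a a'. v (a - a') \<ge> min (v a) (v a'))"

definition subgrp :: "'a::ab_group_add set \<Rightarrow> bool" where
  "subgrp A \<longleftrightarrow> 0 \<in> A \<and> (\<forall>x\<in>A. \<forall>y\<in>A. x + y \<in> A) \<and> (\<forall>x\<in>A. - x \<in> A)"

definition ball_in :: "('a::ab_group_add \<Rightarrow> 'g::linorder) \<Rightarrow> 'a set \<Rightarrow> 'g \<Rightarrow> 'a \<Rightarrow> 'a set" where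
  "ball_in v S \<alpha> a = {a' \<in> S. v (a - a') \<ge> \<alpha>}"

definition balls_in :: "('a::ab_group_add \<Rightarrow> 'g::linorder) \<Rightarrow> 'a set \<Rightarrow> 'a set set" where
  "balls_in v S = {ball_in v S \<alpha> a | \<alpha> a. a \<in> S \<and> \<alpha> \<in> v ` S}"

definition nest_in :: "('a::ab_group_add \<Rightarrow> 'g::linorder) \<Rightarrow> 'a set \<Rightarrow> 'a set set \<Rightarrow> bool" where
  "nest_in v S N \<longleftrightarrow> N \<subseteq> balls_in v S \<and> (\<forall>B\<in>N. \<forall>C\<in>N. B \<subseteq> C \<or> C \<subseteq> B)"

text \<open>(S, v|S) is spherically complete: every nest of balls has nonempty intersection
  (intersection taken inside S, so the empty nest has intersection S).\<close>
definition spherically_complete :: "('a::ab_group_add \<Rightarrow> 'g::linorder) \<Rightarrow> 'a set \<Rightarrow> bool" where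
  "spherically_complete v S \<longleftrightarrow> (\<forall>N. nest_in v S N \<longrightarrow> S \<inter> \<Inter>N \<noteq> {})"

definition sum_subgrps :: "nat \<Rightarrow> (nat \<Rightarrow> 'a::ab_group_add set) \<Rightarrow> 'a set" where
  "sum_subgrps n A = {\<Sum>i=1..n. a i | a. \<forall>i\<in>{1..n}. a i \<in> A i}"

definition pseudo_direct :: "('a::ab_group_add \<Rightarrow> 'g::linorder) \<Rightarrow> nat \<Rightarrow> (nat \<Rightarrow> 'a set) \<Rightarrow> bool" where
  "pseudo_direct v n A \<longleftrightarrow>
     (\<forall>a \<in> sum_subgrps n A. a \<noteq> 0 \<longrightarrow>
        (\<exists>b. (\<forall>i\<in>{1..n}. b i \<in> A i) \<and>
             v (\<Sum>i=1..n. b i) = Min ((\<lambda>i. v (b i)) ` {1..n}) \<and>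
             v (a - (\<Sum>i=1..n. b i)) > v a))"

end

(* Let P be the product of the A_i, where p and q are g-close if every coordinate of p - q
   has value at least g. Since the A_i are spherically complete, every pairwise nested family
   of such product balls has a common point, even when the radii lie outside the value set.

   Combining this with pseudo-directness gives, by Zorn's lemma, a decomposition
   y = p_1 + ... + p_n with v p_i >= v y for each y in the sum. A maximal nested family
   of partial decompositions of y has a common point q. If y differed from the sum of q,
   pseudo-directness would yield a strictly better point that extends the family.

   For a nest of balls in the sum, take a maximal coherent family of pairs (B, p), where
   p lifts a point of B and lifts of two balls are close at the smaller radius. The
   bounded decompositions let every ball of the nest be added to such a family, so the
   family covers the nest. The sum of a common point of all lifts then lies in every ball. *)

theory Submission
  imports Defs "HOL-Library.FuncSet"
begin

lemma maximal_pairwise_subset: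
  assumes "symp R"
  obtains M where "M \<subseteq> X" and "pairwise R M" and "\<And>x. x \<in> X \<Longrightarrow> \<forall>y\<in>M. R x y \<Longrightarrow> x \<in> M"
proof -
  let ?Z = "{M. M \<subseteq> X \<and> pairwise R M}"
  have "\<Union>C \<in> ?Z" if "C \<in> chains ?Z" for C
    using that pairwise_chain_Union[of C R] unfolding chains_def by blast
  then obtain M where M: "M \<in> ?Z" and max: "\<forall>N\<in>?Z. M \<subseteq> N \<longrightarrow> N = M"
    using Zorn_Lemma[of ?Z] by blast
  show thesis
  proof (rule that)
    show "M \<subseteq> X" and "pairwise R M"
      using M by auto
    fix x assume "x \<in> X" and "\<forall>y\<in>M. R x y"
    then have "insert x M \<in> ?Z"
      using M assms by (auto simp: pairwise_insert symp_def)
    then show "x \<in> M"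
      using max by blast
  qed
qed

lemma pairwise_graph_choice:
  assumes "pairwise R M" and "\<And>x. x \<in> X \<Longrightarrow> \<exists>y. (x, y) \<in> M"
  shows "\<exists>f. (\<forall>x\<in>X. (x, f x) \<in> M) \<and> pairwise (\<lambda>x x'. R (x, f x) (x', f x')) X"
proof -
  obtain f where f: "\<forall>x\<in>X. (x, f x) \<in> M"
    using bchoice[of X "\<lambda>x y. (x, y) \<in> M"] assms(2) by blast
  moreover have "pairwise (\<lambda>x x'. R (x, f x) (x', f x')) X"
  proof (rule pairwiseI)
    fix x x' assume "x \<in> X" "x' \<in> X" "x \<noteq> x'"
    then show "R (x, f x) (x', f x')"
      using pairwiseD[OF assms(1)] f by simp
  qed
  ultimately show ?thesis
    by blast
qed

lemma subgrp_diff: "subgrp A \<Longrightarrow> a \<in> A \<Longrightarrow> b \<in> A \<Longrightarrow> a - b \<in> A"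
  unfolding subgrp_def by (metis diff_conv_add_uminus)

lemma subgrp_add: "subgrp A \<Longrightarrow> a \<in> A \<Longrightarrow> b \<in> A \<Longrightarrow> a + b \<in> A"
  unfolding subgrp_def by blast

lemma subgrp_zero: "subgrp A \<Longrightarrow> 0 \<in> A"
  unfolding subgrp_def by blast

definition coords_close :: "('a::ab_group_add \<Rightarrow> 'g::linorder) \<Rightarrow> 'j set \<Rightarrow> 'g \<Rightarrow> ('j \<Rightarrow> 'a) \<Rightarrow> ('j \<Rightarrow> 'a) \<Rightarrow> bool"
  where "coords_close v J g p q \<longleftrightarrow> (\<forall>j\<in>J. g \<le> v (p j - q j))"

lemma sum_subgrps_eq_image: "sum_subgrps n A = (\<lambda>p. \<Sum>i=1..n. p i) ` Pi {1..n} A"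
  unfolding sum_subgrps_def Pi_def by auto

lemma sum_in_sum_subgrps: "p \<in> Pi {1..n} A \<Longrightarrow> (\<Sum>i=1..n. p i) \<in> sum_subgrps n A"
  unfolding sum_subgrps_eq_image by (rule imageI)

lemma sum_subgrps_diff:
  assumes "\<forall>i\<in>{1..n}. subgrp (A i)" and "x \<in> sum_subgrps n A" and "y \<in> sum_subgrps n A"
  shows "x - y \<in> sum_subgrps n A"
proof -
  obtain a b where ab: "a \<in> Pi {1..n} A" "b \<in> Pi {1..n} A"
    and "x = (\<Sum>i=1..n. a i)" "y = (\<Sum>i=1..n. b i)"
    using assms(2,3) unfolding sum_subgrps_eq_image by blast
  then have "x - y = (\<Sum>i=1..n. a i - b i)"
    by (simp add: sum_subtractf)
  moreover have "(\<lambda>i. a i - b i) \<in> Pi {1..n} A"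
    using assms(1) ab by (simp add: Pi_iff subgrp_diff)
  ultimately show ?thesis
    using sum_in_sum_subgrps by metis
qed

locale valued_abelian_group =
  fixes v :: "'a::ab_group_add \<Rightarrow> 'g::{linorder,order_top}"
  assumes valued_group: "valued_group v"
begin

lemma value_zero [simp]: "v 0 = top"
  using valued_group unfolding valued_group_def by blast

lemma min_le_value_diff: "min (v a) (v b) \<le> v (a - b)"
  using valued_group unfolding valued_group_def by blast

lemma value_minus [simp]: "v (- a) = v a"
  using min_le_value_diff[of 0 a] min_le_value_diff[of 0 "- a"] by (simp add: min_absorb2 antisym)

lemma value_diff_commute: "v (a - b) = v (b - a)"
  by (metis minus_diff_eq value_minus)

lemma le_value_diff: "g \<le> v a \<Longrightarrow> g \<le> v b \<Longrightarrow> g \<le> v (a - b)"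
  using min_le_value_diff[of a b] by (simp add: min_def split: if_splits)

lemma le_value_add: "g \<le> v a \<Longrightarrow> g \<le> v b \<Longrightarrow> g \<le> v (a + b)"
  using le_value_diff[of g a "- b"] by simp

lemma le_value_diff_trans: "g \<le> v (a - b) \<Longrightarrow> g \<le> v (b - c) \<Longrightarrow> g \<le> v (a - c)"
  using le_value_add[of g "a - b" "b - c"] by simp

lemma le_value_sum: "(\<And>i. i \<in> I \<Longrightarrow> g \<le> v (f i)) \<Longrightarrow> g \<le> v (sum f I)"
  by (induction I rule: infinite_finite_induct) (simp_all add: le_value_add)

lemma value_eq_if_less_value_diff:
  assumes "v a < v (a - b)"
  shows "v b = v a"
proof (rule antisym)
  show "v b \<le> v a"
    using min_le_value_diff[of b "b - a"] assms by (auto simp: value_diff_commute min_def split: if_splits)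
  show "v a \<le> v b"
    using min_le_value_diff[of a "a - b"] assms by (auto simp: min_def split: if_splits)
qed

lemma ball_in_center: "a \<in> S \<Longrightarrow> a \<in> ball_in v S r a"
  by (simp add: ball_in_def)

lemma ball_in_close: "x \<in> ball_in v S r a \<Longrightarrow> y \<in> ball_in v S r a \<Longrightarrow> r \<le> v (x - y)"
  unfolding ball_in_def by (metis (mono_tags) le_value_diff_trans mem_Collect_eq value_diff_commute)

lemma ball_in_recenter: "z \<in> ball_in v S r a \<Longrightarrow> ball_in v S r z = ball_in v S r a"
  unfolding ball_in_def by (metis (lifting) le_value_diff_trans mem_Collect_eq value_diff_commute)

lemma ball_in_closeI:
  assumes "x \<in> ball_in v S r a" and "y \<in> S" and "r \<le> v (x - y)"
  shows "y \<in> ball_in v S r a"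
proof -
  have "y \<in> ball_in v S r x"
    using assms(2,3) by (simp add: ball_in_def)
  then show ?thesis
    using ball_in_recenter[OF assms(1)] by simp
qed

lemma ball_in_antimono: "r \<le> s \<Longrightarrow> ball_in v S s a \<subseteq> ball_in v S r a"
  unfolding ball_in_def by auto

lemma ball_in_comparable:
  assumes "z \<in> ball_in v S r a" and "z \<in> ball_in v S s b"
  shows "ball_in v S r a \<subseteq> ball_in v S s b \<or> ball_in v S s b \<subseteq> ball_in v S r a"
  using ball_in_recenter[OF assms(1)] ball_in_recenter[OF assms(2)] ball_in_antimono
  by (metis linear)

lemma ball_in_meet:
  assumes "a \<in> S" and "b \<in> S" and "min r s \<le> v (a - b)"
  shows "ball_in v S r a \<inter> ball_in v S s b \<noteq> {}"
proof (cases "r \<le> s")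
  case True
  then have "b \<in> ball_in v S r a"
    using assms by (simp add: ball_in_def min_absorb1)
  then show ?thesis
    using ball_in_center[OF assms(2)] by blast
next
  case False
  then have "a \<in> ball_in v S s b"
    using assms by (simp add: ball_in_def min_absorb2 value_diff_commute[of a])
  then show ?thesis
    using ball_in_center[OF assms(1)] by blast
qed

lemma nest_in_if_meet:
  assumes "\<C> \<subseteq> balls_in v S" and "\<And>B B'. B \<in> \<C> \<Longrightarrow> B' \<in> \<C> \<Longrightarrow> B \<inter> B' \<noteq> {}"
  shows "nest_in v S \<C>"
  unfolding nest_in_def
proof (intro conjI ballI)
  fix B B' assume B: "B \<in> \<C>" and B': "B' \<in> \<C>"
  obtain r a where r: "B = ball_in v S r a"
    using B assms(1) unfolding balls_in_def by blast
  obtain r' a' where r': "B' = ball_in v S r' a'"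
    using B' assms(1) unfolding balls_in_def by blast
  obtain z where "z \<in> B" and "z \<in> B'"
    using assms(2)[OF B B'] by blast
  then show "B \<subseteq> B' \<or> B' \<subseteq> B"
    unfolding r r' by (rule ball_in_comparable)
qed (fact assms(1))

lemma ball_in_between:
  assumes "subgrp A" and "a \<in> A" and "b \<in> A" and "r \<le> v (b - a)" and "v (b - a) \<le> s"
  shows "ball_in v A (v (b - a)) b \<in> balls_in v A"
    and "ball_in v A (v (b - a)) b \<subseteq> ball_in v A r a"
    and "ball_in v A s b \<subseteq> ball_in v A (v (b - a)) b"
proof -
  show "ball_in v A (v (b - a)) b \<in> balls_in v A"
    using subgrp_diff[OF assms(1,3,2)] assms(3) unfolding balls_in_def by blast
  have "b \<in> ball_in v A r a"
    using assms(3,4) by (simp add: ball_in_def value_diff_commute[of a])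
  then have "ball_in v A r b = ball_in v A r a"
    by (rule ball_in_recenter)
  then show "ball_in v A (v (b - a)) b \<subseteq> ball_in v A r a"
    using ball_in_antimono[OF assms(4), of A b] by simp
  show "ball_in v A s b \<subseteq> ball_in v A (v (b - a)) b"
    by (rule ball_in_antimono[OF assms(5)])
qed

lemma coords_close_commute: "coords_close v J g p q \<longleftrightarrow> coords_close v J g q p"
  by (simp add: coords_close_def value_diff_commute)

lemma coords_close_trans: "coords_close v J g p q \<Longrightarrow> coords_close v J g q q' \<Longrightarrow> coords_close v J g p q'"
  unfolding coords_close_def using le_value_diff_trans by blast

lemma coords_close_trans_le:
  "g \<le> h \<Longrightarrow> coords_close v J g p q \<Longrightarrow> coords_close v J h q q' \<Longrightarrow> coords_close v J g p q'"
  unfolding coords_close_def by (meson le_value_diff_trans order.trans)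

lemma coords_close_antimono: "g' \<le> g \<Longrightarrow> coords_close v J g p q \<Longrightarrow> coords_close v J g' p q"
  unfolding coords_close_def by (meson order.trans)

lemma coords_close_sum: "coords_close v J g p q \<Longrightarrow> g \<le> v (sum p J - sum q J)"
  unfolding coords_close_def using le_value_sum[of J g "\<lambda>j. p j - q j"] by (simp add: sum_subtractf)

text \<open>The radii r k need not be values of A. If no centre lies in all the generalised balls,
  each of them contains a later, strictly smaller one, and a genuine ball fits in between.\<close>

lemma spherically_complete_common_point:
  assumes "subgrp A" and "spherically_complete v A" and "c ` I \<subseteq> A"
    and nested: "pairwise (\<lambda>k l. min (r k) (r l) \<le> v (c k - c l)) I"
  shows "\<exists>x\<in>A. \<forall>k\<in>I. r k \<le> v (c k - x)"
proof (cases "\<exists>k\<in>I. \<forall>l\<in>I. r l \<le> v (c l - c k)")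
  case True
  then show ?thesis
    using assms(3) by blast
next
  case False
  then have "\<forall>k\<in>I. \<exists>l\<in>I. v (c l - c k) < r l"
    by (auto simp: not_le)
  then obtain succ where succ: "\<And>k. k \<in> I \<Longrightarrow> succ k \<in> I"
    and escape: "\<And>k. k \<in> I \<Longrightarrow> v (c (succ k) - c k) < r (succ k)"
    using bchoice[of I "\<lambda>k l. l \<in> I \<and> v (c l - c k) < r l"] by blast
  define D where "D k = ball_in v A (r k) (c k)" for k
  define C where "C k = ball_in v A (v (c (succ k) - c k)) (c (succ k))" for k
  have nested': "min (r k) (r l) \<le> v (c k - c l)" if "k \<in> I" "l \<in> I" for k l
    using nested that by (cases "k = l") (auto simp: pairwise_def)
  have radius_le: "r k \<le> v (c (succ k) - c k)" if "k \<in> I" for k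
  proof -
    have "r k \<le> v (c (succ k) - c k) \<or> r (succ k) \<le> v (c (succ k) - c k)"
      using nested'[OF that succ[OF that]] by (simp add: min_le_iff_disj value_diff_commute)
    then show ?thesis
      using escape[OF that] by (meson leD)
  qed
  have C: "C k \<in> balls_in v A \<and> C k \<subseteq> D k \<and> D (succ k) \<subseteq> C k" if k: "k \<in> I" for k
  proof -
    have "c k \<in> A" and "c (succ k) \<in> A"
      using assms(3) succ[OF k] k by auto
    from ball_in_between[OF assms(1) this radius_le[OF k] less_imp_le[OF escape[OF k]]]
    show ?thesis
      unfolding C_def D_def by blast
  qed
  have "nest_in v A (C ` I)"
  proof (rule nest_in_if_meet)
    show "C ` I \<subseteq> balls_in v A"
      using C by blast
    fix B B' assume "B \<in> C ` I" and "B' \<in> C ` I"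
    then obtain k l where k: "k \<in> I" and l: "l \<in> I" and "B = C k" "B' = C l"
      by blast
    have "c (succ k) \<in> A" and "c (succ l) \<in> A"
      using assms(3) succ k l by auto
    then have "D (succ k) \<inter> D (succ l) \<noteq> {}"
      unfolding D_def by (rule ball_in_meet[OF _ _ nested'[OF succ[OF k] succ[OF l]]])
    then show "B \<inter> B' \<noteq> {}"
      using C[OF k] C[OF l] \<open>B = C k\<close> \<open>B' = C l\<close> by blast
  qed
  then obtain x where "x \<in> A" and x: "x \<in> \<Inter>(C ` I)"
    using assms(2) unfolding spherically_complete_def by blast
  have "x \<in> D k" if "k \<in> I" for k
    using x C that by blast
  then show ?thesis
    using \<open>x \<in> A\<close> by (auto simp: D_def ball_in_def)
qed

lemma spherically_complete_product_common_point:
  assumes "\<forall>j\<in>J. subgrp (A j)" and "\<forall>j\<in>J. spherically_complete v (A j)" and "p ` I \<subseteq> Pi J A"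
    and "pairwise (\<lambda>k l. coords_close v J (min (r k) (r l)) (p k) (p l)) I"
  shows "\<exists>q\<in>Pi J A. \<forall>k\<in>I. coords_close v J (r k) (p k) q"
proof -
  have "\<exists>x\<in>A j. \<forall>k\<in>I. r k \<le> v (p k j - x)" if "j \<in> J" for j
  proof (rule spherically_complete_common_point)
    show "subgrp (A j)" and "spherically_complete v (A j)"
      using assms(1,2) that by blast+
    show "(\<lambda>k. p k j) ` I \<subseteq> A j"
      using assms(3) that by (auto simp: Pi_iff)
    show "pairwise (\<lambda>k l. min (r k) (r l) \<le> v (p k j - p l j)) I"
      using assms(4) by (rule pairwise_mono) (use that in \<open>auto simp: coords_close_def\<close>)
  qed
  then obtain q where "\<forall>j\<in>J. q j \<in> A j \<and> (\<forall>k\<in>I. r k \<le> v (p k j - q j))"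
    using bchoice[of J "\<lambda>j x. x \<in> A j \<and> (\<forall>k\<in>I. r k \<le> v (p k j - x))"] by blast
  then show ?thesis
    by (auto simp: coords_close_def)
qed

lemma pseudo_direct_improve:
  assumes sg: "\<forall>i\<in>{1..n}. subgrp (A i)" and pd: "pseudo_direct v n A"
    and y: "y \<in> sum_subgrps n A" and q: "q \<in> Pi {1..n} A" and ne: "(\<Sum>i=1..n. q i) \<noteq> y"
  obtains q' where "q' \<in> Pi {1..n} A"
    and "coords_close v {1..n} (v (y - (\<Sum>i=1..n. q i))) q q'"
    and "v (y - (\<Sum>i=1..n. q i)) < v (y - (\<Sum>i=1..n. q' i))"
proof -
  define z where "z = y - (\<Sum>i=1..n. q i)"
  have "z \<in> sum_subgrps n A" and "z \<noteq> 0"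
    using sum_subgrps_diff[OF sg y sum_in_sum_subgrps[OF q]] ne by (auto simp: z_def)
  then obtain b where b: "\<forall>i\<in>{1..n}. b i \<in> A i"
    and b_min: "v (\<Sum>i=1..n. b i) = Min ((\<lambda>i. v (b i)) ` {1..n})"
    and b_approx: "v z < v (z - (\<Sum>i=1..n. b i))"
    using pd unfolding pseudo_direct_def by blast
  have b_large: "v z \<le> v (b i)" if "i \<in> {1..n}" for i
  proof -
    have "Min ((\<lambda>i. v (b i)) ` {1..n}) \<le> v (b i)"
      using that by (intro Min_le) auto
    then show ?thesis
      using b_min value_eq_if_less_value_diff[OF b_approx] by simp
  qed
  show thesis
  proof (rule that)
    show "(\<lambda>i. q i + b i) \<in> Pi {1..n} A"
      using q b sg by (simp add: Pi_iff subgrp_add)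
    show "coords_close v {1..n} (v (y - (\<Sum>i=1..n. q i))) q (\<lambda>i. q i + b i)"
      using b_large by (simp add: coords_close_def z_def)
    have "y - (\<Sum>i=1..n. q i + b i) = z - (\<Sum>i=1..n. b i)"
      by (simp add: z_def sum.distrib)
    then show "v (y - (\<Sum>i=1..n. q i)) < v (y - (\<Sum>i=1..n. q i + b i))"
      unfolding z_def[symmetric] using b_approx by simp
  qed
qed

lemma close_to_bounded_part:
  assumes p: "\<forall>i\<in>J. v y \<le> v (p i)" and pq: "coords_close v J (v (y - sum p J)) p q"
  shows "\<forall>i\<in>J. v y \<le> v (q i)" and "v (y - sum p J) \<le> v (y - sum q J)"
proof -
  have "v y \<le> v (sum p J)"
    using p by (intro le_value_sum) simp
  then have remainder: "v y \<le> v (y - sum p J)"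
    by (rule le_value_diff[OF order.refl])
  have "v y \<le> v (q i)" if "i \<in> J" for i
  proof -
    have "v y \<le> v (p i - q i)"
      using remainder pq that unfolding coords_close_def by (blast intro: order.trans)
    then have "v y \<le> v (p i - (p i - q i))"
      using p that by (blast intro: le_value_diff)
    then show ?thesis
      by simp
  qed
  then show "\<forall>i\<in>J. v y \<le> v (q i)"
    by blast
  show "v (y - sum p J) \<le> v (y - sum q J)"
    by (rule le_value_diff_trans[OF order.refl coords_close_sum[OF pq]])
qed

lemma pseudo_direct_bounded_decomposition:
  assumes sg: "\<forall>i\<in>{1..n}. subgrp (A i)" and sc: "\<forall>i\<in>{1..n}. spherically_complete v (A i)"
    and pd: "pseudo_direct v n A" and y: "y \<in> sum_subgrps n A"
  obtains p where "p \<in> Pi {1..n} A" and "(\<Sum>i=1..n. p i) = y" and "\<forall>i\<in>{1..n}. v y \<le> v (p i)"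
proof -
  define rad where "rad p = v (y - (\<Sum>i=1..n. p i))" for p
  define G where "G = {p \<in> Pi {1..n} A. \<forall>i\<in>{1..n}. v y \<le> v (p i)}"
  let ?compat = "\<lambda>p p'. coords_close v {1..n} (min (rad p) (rad p')) p p'"
  have compat_sym: "symp ?compat"
    by (auto simp: symp_def coords_close_commute min.commute)
  obtain M where MG: "M \<subseteq> G" and M: "pairwise ?compat M"
    and M_max: "\<And>p. p \<in> G \<Longrightarrow> \<forall>p'\<in>M. ?compat p p' \<Longrightarrow> p \<in> M"
    using maximal_pairwise_subset[where X = G, OF compat_sym] by blast
  have "(\<lambda>_. 0) \<in> G"
    using sg by (simp add: G_def Pi_iff subgrp_zero)
  then obtain p0 where p0: "p0 \<in> M"
    using M_max by blast
  have "(\<lambda>p. p) ` M \<subseteq> Pi {1..n} A"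
    using MG by (auto simp: G_def)
  then obtain q where q: "q \<in> Pi {1..n} A" and q_close: "\<And>p. p \<in> M \<Longrightarrow> coords_close v {1..n} (rad p) p q"
    using spherically_complete_product_common_point[OF sg sc _ M] by blast
  have bounded: "\<forall>i\<in>{1..n}. v y \<le> v (p i)" if "p \<in> M" for p
    using that MG by (auto simp: G_def)
  have rad_le: "rad p \<le> rad q" if "p \<in> M" for p
    using close_to_bounded_part(2)[OF bounded[OF that] q_close[OF that, unfolded rad_def]]
    unfolding rad_def .
  have q_bounded: "\<forall>i\<in>{1..n}. v y \<le> v (q i)"
    using close_to_bounded_part(1)[OF bounded[OF p0] q_close[OF p0, unfolded rad_def]] .
  show thesis
  proof (cases "(\<Sum>i=1..n. q i) = y")
    case True
    then show thesis
      using that q q_bounded by blast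
  next
    case False
    then obtain q' where q': "q' \<in> Pi {1..n} A" and qq': "coords_close v {1..n} (rad q) q q'"
      and improves: "rad q < rad q'"
      using pseudo_direct_improve[OF sg pd y q] unfolding rad_def by blast
    have "q' \<in> G"
      using close_to_bounded_part(1)[OF q_bounded qq'[unfolded rad_def]] q' by (simp add: G_def)
    moreover have "?compat q' p" if "p \<in> M" for p
    proof -
      have "coords_close v {1..n} (rad p) p q'"
        by (rule coords_close_trans_le[OF rad_le[OF that] q_close[OF that] qq'])
      then show ?thesis
        using rad_le[OF that] improves by (simp add: min_absorb2 coords_close_commute)
    qed
    ultimately have "q' \<in> M"
      using M_max by blast
    then show thesis
      using rad_le improves by (meson leD)
  qed
qed

lemma nest_in_radii:
  assumes "nest_in v S N"
  obtains rad where "\<And>B. B \<in> N \<Longrightarrow> \<exists>c\<in>S. ball_in v S (rad B) c = B"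
    and "\<And>B B' x y. B \<in> N \<Longrightarrow> B' \<in> N \<Longrightarrow> x \<in> B \<Longrightarrow> y \<in> B' \<Longrightarrow> min (rad B) (rad B') \<le> v (x - y)"
proof -
  have "\<exists>r. \<exists>c\<in>S. ball_in v S r c = B" if "B \<in> N" for B
    using assms that unfolding nest_in_def balls_in_def by blast
  then obtain rad where rad: "\<And>B. B \<in> N \<Longrightarrow> \<exists>c\<in>S. ball_in v S (rad B) c = B"
    by metis
  show thesis
  proof (rule that[OF rad])
    fix B B' x y assume "B \<in> N" "B' \<in> N" "x \<in> B" "y \<in> B'"
    then have "rad B \<le> v (x - y) \<or> rad B' \<le> v (x - y)"
      using assms rad ball_in_close unfolding nest_in_def by (metis subsetD)
    then show "min (rad B) (rad B') \<le> v (x - y)"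
      by (simp add: min_le_iff_disj)
  qed
qed

lemma sum_subgrps_lift_close:
  assumes sg: "\<forall>i\<in>{1..n}. subgrp (A i)" and sc: "\<forall>i\<in>{1..n}. spherically_complete v (A i)"
    and pd: "pseudo_direct v n A" and x: "x \<in> sum_subgrps n A" and q: "q \<in> Pi {1..n} A"
    and close: "\<And>k. k \<in> I \<Longrightarrow> coords_close v {1..n} (g k) (p k) q \<and> g k \<le> v (x - (\<Sum>i=1..n. p k i))"
  obtains p' where "p' \<in> Pi {1..n} A" and "(\<Sum>i=1..n. p' i) = x"
    and "\<And>k. k \<in> I \<Longrightarrow> coords_close v {1..n} (g k) p' (p k)"
proof -
  define d where "d = x - (\<Sum>i=1..n. q i)"
  have "d \<in> sum_subgrps n A"
    unfolding d_def by (rule sum_subgrps_diff[OF sg x sum_in_sum_subgrps[OF q]])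
  then obtain t where t: "t \<in> Pi {1..n} A" and t_sum: "(\<Sum>i=1..n. t i) = d"
    and t_large: "\<forall>i\<in>{1..n}. v d \<le> v (t i)"
    using pseudo_direct_bounded_decomposition[OF sg sc pd] by blast
  show thesis
  proof (rule that)
    show "(\<lambda>i. q i + t i) \<in> Pi {1..n} A"
      using q t sg by (simp add: Pi_iff subgrp_add)
    show "(\<Sum>i=1..n. q i + t i) = x"
      using t_sum by (simp add: sum.distrib d_def)
  next
    fix k assume "k \<in> I"
    then have pq: "coords_close v {1..n} (g k) (p k) q" and px: "g k \<le> v (x - (\<Sum>i=1..n. p k i))"
      using close by blast+
    have "g k \<le> v d"
      using le_value_diff_trans[OF px coords_close_sum[OF pq]] by (simp add: d_def)
    then have "coords_close v {1..n} (g k) (\<lambda>i. q i + t i) q"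
      using t_large by (auto simp: coords_close_def intro: order.trans)
    moreover have "coords_close v {1..n} (g k) q (p k)"
      using pq coords_close_commute by blast
    ultimately show "coords_close v {1..n} (g k) (\<lambda>i. q i + t i) (p k)"
      by (rule coords_close_trans)
  qed
qed

lemma nest_coherent_lifts:
  assumes sg: "\<forall>i\<in>{1..n}. subgrp (A i)" and sc: "\<forall>i\<in>{1..n}. spherically_complete v (A i)"
    and pd: "pseudo_direct v n A" and nonempty: "\<And>B. B \<in> N \<Longrightarrow> \<exists>x\<in>B. x \<in> sum_subgrps n A"
    and close: "\<And>B B' x y. B \<in> N \<Longrightarrow> B' \<in> N \<Longrightarrow> x \<in> B \<Longrightarrow> y \<in> B' \<Longrightarrow> min (rad B) (rad B') \<le> v (x - y)"
  obtains P where "\<And>B. B \<in> N \<Longrightarrow> P B \<in> Pi {1..n} A \<and> (\<Sum>i=1..n. P B i) \<in> B"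
    and "pairwise (\<lambda>B B'. coords_close v {1..n} (min (rad B) (rad B')) (P B) (P B')) N"
proof -
  define L where "L = {(B, p). B \<in> N \<and> p \<in> Pi {1..n} A \<and> (\<Sum>i=1..n. p i) \<in> B}"
  let ?compat = "\<lambda>l l'. coords_close v {1..n} (min (rad (fst l)) (rad (fst l'))) (snd l) (snd l')"
  have compat_sym: "symp ?compat"
    by (auto simp: symp_def coords_close_commute min.commute)
  obtain M where M_L: "M \<subseteq> L" and M: "pairwise ?compat M"
    and M_max: "\<And>l. l \<in> L \<Longrightarrow> \<forall>l'\<in>M. ?compat l l' \<Longrightarrow> l \<in> M"
    using maximal_pairwise_subset[where X = L, OF compat_sym] by blast
  have "snd ` M \<subseteq> Pi {1..n} A"
    using M_L by (auto simp: L_def Pi_iff)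
  then obtain q where q: "q \<in> Pi {1..n} A"
    and q_close: "\<And>l. l \<in> M \<Longrightarrow> coords_close v {1..n} (rad (fst l)) (snd l) q"
    using spherically_complete_product_common_point[where p = snd and r = "\<lambda>l. rad (fst l)", OF sg sc _ M]
    by blast
  have cover: "\<exists>p. (B, p) \<in> M" if B: "B \<in> N" for B
  proof -
    obtain x where "x \<in> B" and x: "x \<in> sum_subgrps n A"
      using nonempty[OF B] by blast
    have x_close: "coords_close v {1..n} (min (rad B) (rad (fst l))) (snd l) q
        \<and> min (rad B) (rad (fst l)) \<le> v (x - (\<Sum>i=1..n. snd l i))" if "l \<in> M" for l
      using coords_close_antimono[OF min.cobounded2 q_close[OF that]]
        close[OF B _ \<open>x \<in> B\<close>] M_L that by (auto simp: L_def)
    obtain p where "p \<in> Pi {1..n} A" and "(\<Sum>i=1..n. p i) = x"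
      and p_close: "\<And>l. l \<in> M \<Longrightarrow> coords_close v {1..n} (min (rad B) (rad (fst l))) p (snd l)"
      using sum_subgrps_lift_close[where g = "\<lambda>l. min (rad B) (rad (fst l))" and p = snd,
            OF sg sc pd x q x_close] by blast
    then have "(B, p) \<in> L"
      using B \<open>x \<in> B\<close> by (simp add: L_def)
    moreover have "\<forall>l\<in>M. ?compat (B, p) l"
      using p_close by simp
    ultimately have "(B, p) \<in> M"
      by (rule M_max)
    then show ?thesis
      by blast
  qed
  obtain P where P: "\<forall>B\<in>N. (B, P B) \<in> M" and P_coherent: "pairwise (\<lambda>B B'. ?compat (B, P B) (B', P B')) N"
    using pairwise_graph_choice[OF M cover] by blast
  show thesis
  proof (rule that)
    show "P B \<in> Pi {1..n} A \<and> (\<Sum>i=1..n. P B i) \<in> B" if "B \<in> N" for B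
      using P M_L that unfolding L_def by blast
    show "pairwise (\<lambda>B B'. coords_close v {1..n} (min (rad B) (rad B')) (P B) (P B')) N"
      using P_coherent by simp
  qed
qed

lemma coherent_lifts_common_point:
  assumes sg: "\<forall>i\<in>{1..n}. subgrp (A i)" and sc: "\<forall>i\<in>{1..n}. spherically_complete v (A i)"
    and balls: "\<And>B. B \<in> N \<Longrightarrow> \<exists>c\<in>sum_subgrps n A. ball_in v (sum_subgrps n A) (rad B) c = B"
    and P: "\<And>B. B \<in> N \<Longrightarrow> P B \<in> Pi {1..n} A \<and> (\<Sum>i=1..n. P B i) \<in> B"
    and coherent: "pairwise (\<lambda>B B'. coords_close v {1..n} (min (rad B) (rad B')) (P B) (P B')) N"
  shows "sum_subgrps n A \<inter> \<Inter>N \<noteq> {}"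
proof -
  have "P ` N \<subseteq> Pi {1..n} A"
    using P by blast
  then obtain q where q: "q \<in> Pi {1..n} A" and q_close: "\<forall>B\<in>N. coords_close v {1..n} (rad B) (P B) q"
    using spherically_complete_product_common_point[where p = P and r = rad, OF sg sc _ coherent] by blast
  have "(\<Sum>i=1..n. q i) \<in> B" if B: "B \<in> N" for B
  proof -
    obtain c where ball: "ball_in v (sum_subgrps n A) (rad B) c = B"
      using balls[OF B] by blast
    have "rad B \<le> v ((\<Sum>i=1..n. P B i) - (\<Sum>i=1..n. q i))"
      using coords_close_sum q_close B by blast
    then show ?thesis
      using ball_in_closeI[of "\<Sum>i=1..n. P B i" "sum_subgrps n A" "rad B" c "\<Sum>i=1..n. q i"]
        P[OF B] sum_in_sum_subgrps[OF q] unfolding ball by blast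
  qed
  then show ?thesis
    using sum_in_sum_subgrps[OF q] by blast
qed

end

theorem mainTheorem8:
  fixes v :: "'a::ab_group_add \<Rightarrow> 'g::{linorder,order_top}"
    and n :: nat and A :: "nat \<Rightarrow> 'a set"
  assumes "valued_group v"
    and "\<forall>i\<in>{1..n}. subgrp (A i)"
    and "\<forall>i\<in>{1..n}. spherically_complete v (A i)"
    and "pseudo_direct v n A"
  shows "spherically_complete v (sum_subgrps n A)"
  unfolding spherically_complete_def
proof (intro allI impI)
  interpret valued_abelian_group v
    using assms(1) by unfold_locales
  note sg = assms(2) and sc = assms(3) and pd = assms(4)
  fix N assume N: "nest_in v (sum_subgrps n A) N"
  obtain rad where balls: "\<And>B. B \<in> N \<Longrightarrow> \<exists>c\<in>sum_subgrps n A. ball_in v (sum_subgrps n A) (rad B) c = B"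
    and close: "\<And>B B' x y. B \<in> N \<Longrightarrow> B' \<in> N \<Longrightarrow> x \<in> B \<Longrightarrow> y \<in> B' \<Longrightarrow> min (rad B) (rad B') \<le> v (x - y)"
    using nest_in_radii[OF N] by blast
  have nonempty: "\<exists>x\<in>B. x \<in> sum_subgrps n A" if "B \<in> N" for B
    using balls[OF that] ball_in_center by blast
  obtain P where P: "\<And>B. B \<in> N \<Longrightarrow> P B \<in> Pi {1..n} A \<and> (\<Sum>i=1..n. P B i) \<in> B"
    and coherent: "pairwise (\<lambda>B B'. coords_close v {1..n} (min (rad B) (rad B')) (P B) (P B')) N"
    using nest_coherent_lifts[where rad = rad, OF sg sc pd nonempty close] by blast
  show "sum_subgrps n A \<inter> \<Inter>N \<noteq> {}"
    by (rule coherent_lifts_common_point[OF sg sc balls P coherent])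
qed

end
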